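(* Under the setting of the context (with $\boldsymbol{Z}_a=[\boldsymbol{Z}_r\ \boldsymbol{Z}_u]$ of full column rank, $N_u\le N_r$, and arbitrary $\boldsymbol{w}_{\mathrm{init}}$, $\boldsymbol{y}_r$, $\boldsymbol{y}_u$), let $\boldsymbol{Z}_{r,\mathrm{sub}}\in\mathbb{R}^{D\times N_u}$ consist of $N_u$ columns of $\boldsymbol{Z}_r$ and $\boldsymbol{y}_{r,\mathrm{sub}}\in\mathbb{R}^{N_u}$ the corresponding entries of $\boldsymbol{y}_r$. Fix $c\in(0,1)$, set $\tilde{\boldsymbol{Z}}_u=(1-c)\boldsymbol{Z}_{r,\mathrm{sub}}+c\boldsymbol{Z}_u$, $\tilde{\boldsymbol{Z}}_a=[\boldsymbol{Z}_r\ \tilde{\boldsymbol{Z}}_u]$, $\tilde{\boldsymbol{y}}_a=[\boldsymbol{y}_r;\boldsymbol{y}_{r,\mathrm{sub}}]$, and define the unlearned model $\boldsymbol{w}_u=\boldsymbol{w}_p+\tilde{\boldsymbol{Z}}_a(\tilde{\boldsymbol{Z}}_a^\top\tilde{\boldsymbol{Z}}_a)^{-1}(\tilde{\boldsymbol{y}}_a-\tilde{\boldsymbol{Z}}_a^\top\boldsymbol{w}_p)$. Then $\tilde{\boldsymbol{Z}}_a^\top\tilde{\boldsymbol{Z}}_a$ is invertible and $$\boldsymbol{w}_r-\boldsymbol{w}_u=(\boldsymbol{I}_D-\boldsymbol{\Pi}_r)\boldsymbol{Z}_u\boldsymbol{M}\Big(\boldsymbol{K}_{ur}\boldsymbol{K}_{rr}^{-1}(\boldsymbol{y}_r-\boldsymbol{Z}_r^\top\boldsymbol{w}_{\mathrm{init}})+\boldsymbol{Z}_u^\top\boldsymbol{w}_{\mathrm{init}}-\boldsymbol{y}_{r,\mathrm{sub}}\Big);$$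 in particular $\boldsymbol{w}_r-\boldsymbol{w}_u$ does not depend on $c$.
   Context: Setting (over-parameterized linear model trained to interpolation / minimum-distance solutions). Given $\boldsymbol{Z}_r\in\mathbb{R}^{D\times N_r}$ (features of remaining data), $\boldsymbol{Z}_u\in\mathbb{R}^{D\times N_u}$ (features of forgetting data), with $\boldsymbol{Z}_a=[\boldsymbol{Z}_r\ \boldsymbol{Z}_u]$ of full column rank. Write $\boldsymbol{y}_a=[\boldsymbol{y}_r;\boldsymbol{y}_u]\in\mathbb{R}^{N_r+N_u}$ (original labels), $\boldsymbol{w}_{\mathrm{init}}\in\mathbb{R}^D$. Define $\boldsymbol{w}_p=\boldsymbol{w}_{\mathrm{init}}+\boldsymbol{Z}_a(\boldsymbol{Z}_a^\top\boldsymbol{Z}_a)^{-1}(\boldsymbol{y}_a-\boldsymbol{Z}_a^\top\boldsymbol{w}_{\mathrm{init}})$ (pre-trained model), $\boldsymbol{w}_r=\boldsymbol{w}_{\mathrm{init}}+\boldsymbol{Z}_r(\boldsymbol{Z}_r^\top\boldsymbol{Z}_r)^{-1}(\boldsymbol{y}_r-\boldsymbol{Z}_r^\top\boldsymbol{w}_{\mathrm{init}})$ (retrained model). Let $\boldsymbol{K}_{rr}=\boldsymbol{Z}_r^\top\boldsymbol{Z}_r$, $\boldsymbol{K}_{ru}=\boldsymbol{Z}_r^\top\boldsymbol{Z}_u$, $\boldsymbol{K}_{ur}=\boldsymbol{Z}_u^\top\boldsymbol{Z}_r$, $\boldsymbol{K}_{uu}=\boldsymbol{Z}_u^\top\boldsymbol{Z}_u$,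 $\boldsymbol{M}=(\boldsymbol{K}_{uu}-\boldsymbol{K}_{ur}\boldsymbol{K}_{rr}^{-1}\boldsymbol{K}_{ru})^{-1}$ (inverse of the Schur complement), and $\boldsymbol{\Pi}_r=\boldsymbol{Z}_r(\boldsymbol{Z}_r^\top\boldsymbol{Z}_r)^{-1}\boldsymbol{Z}_r^\top$. $\boldsymbol{I}_D$ is the $D\times D$ identity. *)

theory Defs
  imports "HOL-Analysis.Analysis"
begin

definition hcat :: "real^'p^'d \<Rightarrow> real^'q^'d \<Rightarrow> real^('p + 'q)^'d" where
  "hcat A B = (\<chi> i j. case j of Inl a \<Rightarrow> A $ i $ a | Inr b \<Rightarrow> B $ i $ b)"

definition vcat :: "real^'p \<Rightarrow> real^'q \<Rightarrow> real^('p + 'q)" where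
  "vcat x y = (\<chi> j. case j of Inl a \<Rightarrow> x $ a | Inr b \<Rightarrow> y $ b)"

definition min_dist_sol :: "real^'d \<Rightarrow> real^'n^'d \<Rightarrow> real^'n \<Rightarrow> real^'d" where
  "min_dist_sol w0 Z y = w0 + Z *v (matrix_inv (transpose Z ** Z) *v (y - transpose Z *v w0))"

end

theory Submission
  imports Defs
begin

text \<open>Both the retrained model \<open>wr\<close> and the unlearned model \<open>wu\<close> interpolate \<open>yr\<close> on \<open>Zr\<close>.
  Moreover \<open>wu\<close> interpolates \<open>yrsub\<close> on the mixed features, and since the \<open>Zr\<close>-part of
  these already predicts \<open>yrsub\<close>, \<open>wu\<close> must predict \<open>yrsub\<close> on \<open>Zu\<close> itself: the mixing
  weight \<open>c\<close> drops out. Hence \<open>d = wr - wu\<close> lies in the column space of \<open>[Zr Zu]\<close>, is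
  orthogonal to \<open>Zr\<close>, and \<open>Zu\<^sup>T d\<close> is a known vector \<open>q\<close>. Writing \<open>d = Zr a + Zu b\<close>,
  orthogonality forces \<open>a = - Krr\<^sup>-\<^sup>1 Kru b\<close>, so \<open>d = (I - \<Pi>r) Zu b\<close> and
  \<open>Zu\<^sup>T d = S b\<close> with \<open>S\<close> the Schur complement, which is invertible by full column rank;
  thus \<open>b = M q\<close>.\<close>

declare transpose_matrix_vector [simp del]

lemma matrix_vector_mult_minus_distrib: "A *v (- x) = - (A *v x)" for A :: "real^'n^'m"
  by (simp add: vec_eq_iff matrix_vector_mult_def sum_negf)

lemma matrix_inv_right:
  fixes A :: "'a::field^'n^'n"
  assumes "invertible A"
  shows "A ** matrix_inv A = mat 1"
  using someI_ex[OF assms[unfolded invertible_def]] unfolding matrix_inv_def by auto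

lemma matrix_inv_left:
  fixes A :: "'a::field^'n^'n"
  assumes "invertible A"
  shows "matrix_inv A ** A = mat 1"
  using someI_ex[OF assms[unfolded invertible_def]] unfolding matrix_inv_def by auto

lemma matrix_inv_cancel:
  fixes A :: "'a::field^'n^'n"
  assumes "invertible A"
  shows "A *v (matrix_inv A *v x) = x" "matrix_inv A *v (A *v x) = x"
  by (simp_all add: matrix_vector_mul_assoc matrix_inv_left[OF assms] matrix_inv_right[OF assms])

lemma invertible_iff_kernel_zero:
  fixes A :: "real^'n^'n"
  shows "invertible A \<longleftrightarrow> (\<forall>x. A *v x = 0 \<longrightarrow> x = 0)"
  by (simp add: invertible_left_inverse matrix_left_invertible_injective vec.inj_iff_eq_0)

lemma range_orthogonal_eq_0:
  fixes Z :: "real^'n^'m"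
  assumes "x \<in> range ((*v) Z)" and "transpose Z *v x = 0"
  shows "x = 0"
proof -
  obtain v where x: "x = Z *v v" using assms(1) by blast
  have "x \<bullet> x = v \<bullet> (transpose Z *v x)"
    unfolding x by (metis dot_lmul_matrix vector_transpose_matrix)
  then show ?thesis using assms(2) by simp
qed

lemma invertible_gram:
  fixes Z :: "real^'n^'m"
  assumes "inj ((*v) Z)"
  shows "invertible (transpose Z ** Z)"
  unfolding invertible_iff_kernel_zero
proof (intro allI impI)
  fix v assume v: "(transpose Z ** Z) *v v = 0"
  have "Z *v v = 0"
    by (rule range_orthogonal_eq_0) (use v in \<open>auto simp: matrix_vector_mul_assoc\<close>)
  then show "v = 0" using assms by (simp add: vec.inj_iff_eq_0)
qed

lemma subspace_range_matrix_vector_mult: "subspace (range ((*v) (Z :: real^'n^'m)))"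
  by (simp add: linear_subspace_image)

lemma min_dist_sol_interpolates:
  fixes Z :: "real^'n^'m"
  assumes "invertible (transpose Z ** Z)"
  shows "transpose Z *v min_dist_sol w0 Z y = y"
proof -
  have "transpose Z *v (Z *v v) = (transpose Z ** Z) *v v" for v
    by (rule matrix_vector_mul_assoc)
  then show ?thesis
    unfolding min_dist_sol_def
    by (simp add: matrix_vector_right_distrib matrix_inv_cancel[OF assms])
qed

lemma min_dist_sol_minus_in_range: "min_dist_sol w0 Z y - w0 \<in> range ((*v) Z)"
  unfolding min_dist_sol_def by simp

lemma hcat_mult_vector: "hcat A B *v x = A *v (\<chi> a. x $ Inl a) + B *v (\<chi> b. x $ Inr b)"
proof -
  have "(\<Sum>j\<in>UNIV. f j) = (\<Sum>a\<in>UNIV. f (Inl a)) + (\<Sum>b\<in>UNIV. f (Inr b))"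
    for f :: "('p::finite) + ('q::finite) \<Rightarrow> real"
    by (subst UNIV_Plus_UNIV[symmetric], subst sum.Plus) (auto simp: o_def)
  from this[of "\<lambda>j. (case j of Inl a \<Rightarrow> A $ i $ a | Inr b \<Rightarrow> B $ i $ b) * x $ j" for i]
  show ?thesis
    by (simp add: vec_eq_iff matrix_vector_mult_def hcat_def)
qed

lemma vcat_split: "x = vcat (\<chi> a. x $ Inl a) (\<chi> b. x $ Inr b)"
  by (simp add: vcat_def vec_eq_iff split: sum.split)

lemma hcat_mult_vcat: "hcat A B *v vcat a b = A *v a + B *v b"
  by (simp add: hcat_mult_vector vcat_def)

lemma range_hcat: "x \<in> range ((*v) (hcat A B)) \<longleftrightarrow> (\<exists>a b. x = A *v a + B *v b)"
proof
  assume "x \<in> range ((*v) (hcat A B))"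
  then show "\<exists>a b. x = A *v a + B *v b" by (auto simp: hcat_mult_vector)
next
  assume "\<exists>a b. x = A *v a + B *v b"
  then show "x \<in> range ((*v) (hcat A B))" by (metis hcat_mult_vcat rangeI)
qed

lemma transpose_hcat_mult:
  "transpose (hcat A B) *v w = vcat (transpose A *v w) (transpose B *v w)"
  by (simp add: vec_eq_iff matrix_vector_mult_def hcat_def vcat_def transpose_def split: sum.split)

lemma vcat_eq_iff: "vcat a b = vcat a' b' \<longleftrightarrow> a = a' \<and> b = b'"
  by (auto simp: vcat_def vec_eq_iff dest: spec[of _ "Inl _"] spec[of _ "Inr _"] split: sum.split)

lemma vcat_eq_0_iff: "vcat a b = 0 \<longleftrightarrow> a = 0 \<and> b = 0"
  by (auto simp: vcat_def vec_eq_iff dest: spec[of _ "Inl _"] spec[of _ "Inr _"] split: sum.split)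

lemma inj_hcat_iff:
  "inj ((*v) (hcat A B)) \<longleftrightarrow> (\<forall>a b. A *v a + B *v b = 0 \<longrightarrow> a = 0 \<and> b = 0)"
  unfolding vec.inj_iff_eq_0 by (metis hcat_mult_vcat vcat_eq_0_iff vcat_split)

lemma inj_hcat_left:
  assumes "inj ((*v) (hcat A B))"
  shows "inj ((*v) A)"
  unfolding vec.inj_iff_eq_0
proof (intro allI impI)
  fix x assume "A *v x = 0"
  then show "x = 0" using assms[unfolded inj_hcat_iff, rule_format, of x 0] by simp
qed

lemma range_subset_range_hcat_left: "range ((*v) A) \<subseteq> range ((*v) (hcat A B))"
proof
  fix x assume "x \<in> range ((*v) A)"
  then obtain a where "x = A *v a" by blast
  then have "x = hcat A B *v vcat a 0" by (simp add: hcat_mult_vcat)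
  then show "x \<in> range ((*v) (hcat A B))" by blast
qed

definition range_proj :: "real^'p^'d \<Rightarrow> real^'d^'d" where
  "range_proj A = A ** matrix_inv (transpose A ** A) ** transpose A"

definition schur_complement :: "real^'p^'d \<Rightarrow> real^'q^'d \<Rightarrow> real^'q^'q" where
  "schur_complement A B = transpose B ** B - transpose B ** A ** matrix_inv (transpose A ** A) ** (transpose A ** B)"

lemma range_proj_compl_mult:
  fixes A :: "real^'p^'d"
  shows "(mat 1 - range_proj A) *v v
         = v - A *v (matrix_inv (transpose A ** A) *v (transpose A *v v))"
  by (simp add: range_proj_def matrix_vector_mult_diff_rdistrib matrix_vector_mul_assoc[symmetric])

lemma transpose_mult_range_proj_compl:
  fixes A :: "real^'p^'d"
  assumes "invertible (transpose A ** A)"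
  shows "transpose A *v ((mat 1 - range_proj A) *v v) = 0"
proof -
  have "transpose A *v (A *v u) = (transpose A ** A) *v u" for u
    by (rule matrix_vector_mul_assoc)
  then show ?thesis
    by (simp add: range_proj_compl_mult matrix_vector_mult_diff_distrib matrix_inv_cancel[OF assms])
qed

lemma transpose_mult_range_proj_compl_schur:
  fixes A :: "real^'p^'d" and B :: "real^'q^'d"
  shows "transpose B *v ((mat 1 - range_proj A) *v (B *v b))
         = schur_complement A B *v b"
  unfolding range_proj_compl_mult schur_complement_def
  by (simp only: matrix_vector_mult_diff_distrib matrix_vector_mult_diff_rdistrib
      matrix_vector_mul_assoc[symmetric])

lemma orthogonal_residual_eq_range_proj_compl:
  fixes A :: "real^'p^'d" and B :: "real^'q^'d"
  assumes G: "invertible (transpose A ** A)" and "transpose A *v (A *v a + B *v b) = 0"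
  shows "A *v a + B *v b = (mat 1 - range_proj A) *v (B *v b)"
proof -
  have "(transpose A ** A) *v a = - (transpose A *v (B *v b))"
    using assms(2) by (simp add: matrix_vector_right_distrib matrix_vector_mul_assoc eq_neg_iff_add_eq_0)
  then have "a = - (matrix_inv (transpose A ** A) *v (transpose A *v (B *v b)))"
    by (metis matrix_inv_cancel(2)[OF G] matrix_vector_mult_minus_distrib)
  then show ?thesis
    by (simp add: range_proj_compl_mult matrix_vector_mult_minus_distrib)
qed

lemma invertible_schur_complement:
  fixes A :: "real^'p^'d" and B :: "real^'q^'d"
  assumes inj: "inj ((*v) (hcat A B))"
  shows "invertible (schur_complement A B)"
    (is "invertible ?S")
  unfolding invertible_iff_kernel_zero
proof (intro allI impI)
  let ?G = "transpose A ** A"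
  have G: "invertible ?G" using invertible_gram[OF inj_hcat_left[OF inj]] .
  fix x assume "?S *v x = 0"
  define e where "e = (mat 1 - range_proj A) *v (B *v x)"
  have e_split: "e = A *v (- (matrix_inv ?G *v (transpose A *v (B *v x)))) + B *v x"
    by (simp add: e_def range_proj_compl_mult matrix_vector_mult_minus_distrib)
  have "transpose A *v e = 0" "transpose B *v e = 0"
    using transpose_mult_range_proj_compl[OF G] \<open>?S *v x = 0\<close>
    by (simp_all add: e_def transpose_mult_range_proj_compl_schur)
  then have "e = 0"
    using range_orthogonal_eq_0[of e "hcat A B"] e_split
    by (auto simp: range_hcat transpose_hcat_mult vcat_eq_0_iff)
  then show "x = 0" using inj e_split unfolding inj_hcat_iff by metis
qed

lemma range_hcat_orthogonal_eq:
  fixes A :: "real^'p^'d" and B :: "real^'q^'d"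
  assumes inj: "inj ((*v) (hcat A B))"
    and "d \<in> range ((*v) (hcat A B))" and "transpose A *v d = 0"
  shows "d = (mat 1 - range_proj A) *v (B *v
              (matrix_inv (schur_complement A B) *v (transpose B *v d)))"
proof -
  obtain a b where d: "d = A *v a + B *v b" using assms(2) by (auto simp: range_hcat)
  have G: "invertible (transpose A ** A)"
    using invertible_gram[OF inj_hcat_left[OF inj]] .
  have proj: "d = (mat 1 - range_proj A) *v (B *v b)"
    unfolding d using assms(3)[unfolded d] by (rule orthogonal_residual_eq_range_proj_compl[OF G])
  then have "transpose B *v d = schur_complement A B *v b"
    by (simp only: transpose_mult_range_proj_compl_schur)
  then have b: "b = matrix_inv (schur_complement A B) *v (transpose B *v d)"
    by (simp add: matrix_inv_cancel[OF invertible_schur_complement[OF inj]])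
  show ?thesis
    unfolding b[symmetric] by (rule proj)
qed

lemma mixed_mult:
  fixes A :: "real^'p^'d" and B :: "real^'q^'d" and P :: "real^'q^'p"
  shows "(k *\<^sub>R (A ** P) + c *\<^sub>R B) *v b = A *v (k *\<^sub>R (P *v b)) + B *v (c *\<^sub>R b)"
  by (simp add: matrix_vector_mult_add_rdistrib scaleR_matrix_vector_assoc[symmetric]
      matrix_vector_mul_assoc[symmetric] matrix_vector_mult_scaleR)

lemma inj_hcat_mixed:
  fixes A :: "real^'p^'d" and B :: "real^'q^'d" and P :: "real^'q^'p"
  assumes inj: "inj ((*v) (hcat A B))" and "c \<noteq> 0"
  shows "inj ((*v) (hcat A (k *\<^sub>R (A ** P) + c *\<^sub>R B)))"
  unfolding inj_hcat_iff
proof (intro allI impI)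
  fix a b assume "A *v a + (k *\<^sub>R (A ** P) + c *\<^sub>R B) *v b = 0"
  then have "A *v (a + k *\<^sub>R (P *v b)) + B *v (c *\<^sub>R b) = 0"
    by (simp add: mixed_mult matrix_vector_right_distrib add.assoc)
  then have "a + k *\<^sub>R (P *v b) = 0" "c *\<^sub>R b = 0"
    using inj unfolding inj_hcat_iff by blast+
  then show "a = 0 \<and> b = 0" using \<open>c \<noteq> 0\<close> by simp
qed

lemma range_hcat_mixed_subset:
  fixes A :: "real^'p^'d" and B :: "real^'q^'d" and P :: "real^'q^'p"
  shows "range ((*v) (hcat A (k *\<^sub>R (A ** P) + c *\<^sub>R B))) \<subseteq> range ((*v) (hcat A B))"
proof
  fix x assume "x \<in> range ((*v) (hcat A (k *\<^sub>R (A ** P) + c *\<^sub>R B)))"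
  then obtain a b where "x = A *v a + (k *\<^sub>R (A ** P) + c *\<^sub>R B) *v b"
    by (auto simp: range_hcat)
  then have "x = A *v (a + k *\<^sub>R (P *v b)) + B *v (c *\<^sub>R b)"
    by (simp add: mixed_mult matrix_vector_right_distrib add.assoc)
  then show "x \<in> range ((*v) (hcat A B))"
    unfolding range_hcat by blast
qed

lemma transpose_mixed_mult:
  fixes A :: "real^'p^'d" and B :: "real^'q^'d" and P :: "real^'q^'p"
  shows "transpose (k *\<^sub>R (A ** P) + c *\<^sub>R B) *v w
         = k *\<^sub>R (transpose P *v (transpose A *v w)) + c *\<^sub>R (transpose B *v w)"
proof -
  have "transpose (X + Y) = transpose X + transpose Y" for X Y :: "real^'q^'d"
    by (simp add: transpose_def vec_eq_iff)
  then show ?thesis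
    by (simp add: transpose_scalar matrix_transpose_mul matrix_vector_mult_add_rdistrib
        scaleR_matrix_vector_assoc[symmetric] matrix_vector_mul_assoc[symmetric])
qed

lemma mixed_min_dist_sol_interpolates:
  fixes A :: "real^'p^'d" and B :: "real^'q^'d" and P :: "real^'q^'p"
  assumes "inj ((*v) (hcat A B))" and "c \<noteq> 0"
    and wu: "wu = min_dist_sol w (hcat A ((1 - c) *\<^sub>R (A ** P) + c *\<^sub>R B)) (vcat y (transpose P *v y))"
  shows "transpose A *v wu = y" and "transpose B *v wu = transpose P *v y"
proof -
  have "transpose (hcat A ((1 - c) *\<^sub>R (A ** P) + c *\<^sub>R B)) *v wu = vcat y (transpose P *v y)"
    unfolding wu by (intro min_dist_sol_interpolates invertible_gram inj_hcat_mixed assms(1,2))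
  then have fit_A: "transpose A *v wu = y"
    and fit_mixed: "(1 - c) *\<^sub>R (transpose P *v (transpose A *v wu)) + c *\<^sub>R (transpose B *v wu)
                    = transpose P *v y"
    unfolding transpose_hcat_mult vcat_eq_iff transpose_mixed_mult by blast+
  have "(1 - c) *\<^sub>R (transpose P *v y) + c *\<^sub>R (transpose B *v wu) = transpose P *v y"
    using fit_mixed unfolding fit_A .
  then have "c *\<^sub>R (transpose B *v wu) = c *\<^sub>R (transpose P *v y)"
    by (simp add: algebra_simps)
  with fit_A show "transpose A *v wu = y" and "transpose B *v wu = transpose P *v y"
    using assms(2) by simp_all
qed

lemma mixup_unlearning_residual:
  fixes A :: "real^'p^'d" and B :: "real^'q^'d" and P :: "real^'q^'p"
  assumes inj: "inj ((*v) (hcat A B))" and "c \<noteq> 0"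
  shows "min_dist_sol w0 A y
           - min_dist_sol (min_dist_sol w0 (hcat A B) ya)
               (hcat A ((1 - c) *\<^sub>R (A ** P) + c *\<^sub>R B)) (vcat y (transpose P *v y))
         = (mat 1 - range_proj A) *v (B *v
             (matrix_inv (schur_complement A B) *v
              ((transpose B ** A) *v (matrix_inv (transpose A ** A) *v (y - transpose A *v w0))
               + transpose B *v w0 - transpose P *v y)))"
proof -
  define wr where "wr = min_dist_sol w0 A y"
  define wp where "wp = min_dist_sol w0 (hcat A B) ya"
  define wu where "wu = min_dist_sol wp (hcat A ((1 - c) *\<^sub>R (A ** P) + c *\<^sub>R B)) (vcat y (transpose P *v y))"
  have fit_u: "transpose A *v wu = y" "transpose B *v wu = transpose P *v y"
    using mixed_min_dist_sol_interpolates[OF inj \<open>c \<noteq> 0\<close> wu_def] by simp_all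
  have "transpose A *v wr = y"
    unfolding wr_def by (intro min_dist_sol_interpolates invertible_gram inj_hcat_left[OF inj])
  then have orth: "transpose A *v (wr - wu) = 0"
    by (simp add: matrix_vector_mult_diff_distrib fit_u)
  have "wr - w0 \<in> range ((*v) (hcat A B))" "wp - w0 \<in> range ((*v) (hcat A B))"
    "wu - wp \<in> range ((*v) (hcat A B))"
    using min_dist_sol_minus_in_range range_subset_range_hcat_left range_hcat_mixed_subset
    unfolding wr_def wp_def wu_def by blast+
  then have "(wr - w0) - (wp - w0) - (wu - wp) \<in> range ((*v) (hcat A B))"
    using subspace_range_matrix_vector_mult by (blast intro: subspace_diff)
  then have range: "wr - wu \<in> range ((*v) (hcat A B))"
    by simp
  have "transpose B *v (wr - wu)
        = (transpose B ** A) *v (matrix_inv (transpose A ** A) *v (y - transpose A *v w0))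
          + transpose B *v w0 - transpose P *v y"
    by (simp add: wr_def min_dist_sol_def matrix_vector_right_distrib matrix_vector_mult_diff_distrib
        matrix_vector_mul_assoc[symmetric] fit_u)
  with range_hcat_orthogonal_eq[OF inj range orth] show ?thesis
    unfolding wr_def wp_def wu_def by simp
qed

definition column_selection :: "('q \<Rightarrow> 'p) \<Rightarrow> real^'q^'p" where
  "column_selection s = (\<chi> k j. if s j = k then 1 else 0)"

lemma matrix_mult_column_selection: "Z ** column_selection s = (\<chi> i j. Z $ i $ s j)"
  by (simp add: column_selection_def matrix_matrix_mult_def vec_eq_iff if_distrib cong: if_cong)

lemma transpose_column_selection_mult: "transpose (column_selection s) *v y = (\<chi> j. y $ s j)"
  by (simp add: column_selection_def matrix_vector_mult_def transpose_def vec_eq_iff mult_delta_left)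

theorem mainTheorem4:
  fixes Zr :: "real^'nr^'d" and Zu :: "real^'nu^'d"
    and yr :: "real^'nr" and yu :: "real^'nu" and winit :: "real^'d"
    and s :: "'nu \<Rightarrow> 'nr" and c :: real
  assumes full_rank: "rank (hcat Zr Zu) = CARD('nr + 'nu)"
    and size_le: "CARD('nu) \<le> CARD('nr)"
    and sub_inj: "inj s"
    and c_pos: "0 < c" and c_lt1: "c < 1"
  shows
    "let Za = hcat Zr Zu; ya = vcat yr yu;
         wp = min_dist_sol winit Za ya;
         wr = min_dist_sol winit Zr yr;
         Zrsub = (\<chi> i j. Zr $ i $ s j) :: real^'nu^'d;
         yrsub = (\<chi> j. yr $ s j) :: real^'nu;
         Zut = (1 - c) *\<^sub>R Zrsub + c *\<^sub>R Zu;
         Zat = hcat Zr Zut;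
         yat = vcat yr yrsub;
         wu = wp + Zat *v (matrix_inv (transpose Zat ** Zat) *v (yat - transpose Zat *v wp));
         Krr = transpose Zr ** Zr;
         Kru = transpose Zr ** Zu;
         Kur = transpose Zu ** Zr;
         Kuu = transpose Zu ** Zu;
         M = matrix_inv (Kuu - Kur ** matrix_inv Krr ** Kru);
         Pir = Zr ** matrix_inv Krr ** transpose Zr
     in invertible (transpose Zat ** Zat) \<and>
        wr - wu = (mat 1 - Pir) *v (Zu *v (M *v
           (Kur *v (matrix_inv Krr *v (yr - transpose Zr *v winit))
            + transpose Zu *v winit - yrsub)))"
proof -
  have inj: "inj ((*v) (hcat Zr Zu))"
    using full_rank unfolding full_rank_injective .
  have "c \<noteq> 0"
    using c_pos by simp
  show ?thesis
    unfolding Let_def matrix_mult_column_selection[symmetric]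
    unfolding transpose_column_selection_mult[symmetric]
    unfolding min_dist_sol_def[symmetric]
    using invertible_gram[OF inj_hcat_mixed[OF inj \<open>c \<noteq> 0\<close>]]
      mixup_unlearning_residual[OF inj \<open>c \<noteq> 0\<close>, unfolded range_proj_def schur_complement_def]
    by simp
qed

end
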